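(* Let $A_0,A_1,A_2\in\mathbb{R}[x]$ with $A_2\not\equiv0$, let $I$ be an open interval on which $A_2$ has no zeros, and let $g_0,g_1\in\mathbb{R}[x,y]$ with $g_1\not\equiv0$ and $\partial_y(g_0/g_1)\not\equiv0$. Let $\mathcal{X}=P\partial_x+Q\partial_y$ with $$P=A_2\left(g_0\,\partial_y g_1-g_1\,\partial_y g_0\right),\qquad Q=A_0g_1^2+A_1g_1g_0+A_2g_0^2+A_2\left(g_1\,\partial_x g_0-g_0\,\partial_x g_1\right).$$ Let $\{w_1,w_2\}$ be a fundamental system of solutions on $I$ of $A_2w''+A_1w'+A_0w=0$ and define $f_i(x,y)=g_1(x,y)w_i'(x)-g_0(x,y)w_i(x)$, $i=1,2$. Then on the open set $U=\{(x,y)\in I\times\mathbb{R}: f_2(x,y)\neq0\}$ the function $$H=\frac{f_1}{f_2}=\frac{g_1 w_1'-g_0w_1}{g_1w_2'-g_0w_2}$$ is a first integral of $\mathcal{X}$.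
   Context: A first integral of $\mathcal{X}=P\partial_x+Q\partial_y$ on an open set $U$ is a $C^1$ function $H:U\to\mathbb{R}$ with $P\,\partial_xH+Q\,\partial_yH=0$ on $U$ which is not constant on any nonempty open subset of $U$. *)

theory Defs
  imports "HOL-Analysis.Analysis" "HOL-Computational_Algebra.Polynomial"
begin

text \<open>Bivariate real polynomials R[x,y] are represented as R[x][y], i.e. the type
  real poly poly: a polynomial in y whose coefficients are polynomials in x.\<close>

definition eval2 :: "real poly poly \<Rightarrow> real \<Rightarrow> real \<Rightarrow> real" where
  "eval2 g x y = poly (map_poly (\<lambda>c. poly c x) g) y"

definition dx2 :: "real poly poly \<Rightarrow> real poly poly" where
  "dx2 g = map_poly pderiv g"

definition dy2 :: "real poly poly \<Rightarrow> real poly poly" where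
  "dy2 g = pderiv g"

definition cx :: "real poly \<Rightarrow> real poly poly" where
  "cx a = [:a:]"

definition ode_solution :: "real poly \<Rightarrow> real poly \<Rightarrow> real poly \<Rightarrow> real set \<Rightarrow> (real \<Rightarrow> real) \<Rightarrow> bool" where
  "ode_solution A0 A1 A2 I w \<longleftrightarrow>
     (\<forall>x\<in>I. w differentiable (at x) \<and> deriv w differentiable (at x) \<and>
        poly A2 x * deriv (deriv w) x + poly A1 x * deriv w x + poly A0 x * w x = 0)"

definition fundamental_system :: "real poly \<Rightarrow> real poly \<Rightarrow> real poly \<Rightarrow> real set \<Rightarrow> (real \<Rightarrow> real) \<Rightarrow> (real \<Rightarrow> real) \<Rightarrow> bool" where
  "fundamental_system A0 A1 A2 I w1 w2 \<longleftrightarrow>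
     ode_solution A0 A1 A2 I w1 \<and> ode_solution A0 A1 A2 I w2 \<and>
     (\<forall>c1 c2::real. (\<forall>x\<in>I. c1 * w1 x + c2 * w2 x = 0) \<longrightarrow> c1 = 0 \<and> c2 = 0)"

definition first_integral :: "(real \<times> real \<Rightarrow> real) \<Rightarrow> (real \<times> real \<Rightarrow> real) \<Rightarrow> (real \<times> real) set \<Rightarrow> (real \<times> real \<Rightarrow> real) \<Rightarrow> bool" where
  "first_integral P Q U H \<longleftrightarrow>
     (\<exists>Hx Hy. (\<forall>p\<in>U. (H has_derivative (\<lambda>(u, v). Hx p * u + Hy p * v)) (at p)) \<and>
        continuous_on U Hx \<and> continuous_on U Hy \<and>
        (\<forall>p\<in>U. P p * Hx p + Q p * Hy p = 0)) \<and>
     (\<forall>V. open V \<and> V \<noteq> {} \<and> V \<subseteq> U \<longrightarrow> \<not> (\<exists>c. \<forall>p\<in>V. H p = c))"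

end

theory Submission
  imports Defs
begin

text \<open>For a solution w of L w = A2 w'' + A1 w' + A0 w = 0 put f_w = g1 w' - g0 w. A polynomial
  identity shows that f2 X f1 - f1 X f2 is a multiple of f2 L w1 - f1 L w2, so X annihilates
  H = f1/f2 wherever f2 \<noteq> 0. If H were constant c on an open box A \<times> B, then u = w1 - c w2
  would satisfy g1(x,y) u'(x) = g0(x,y) u(x) for all x \<in> A and, as an identity of polynomials,
  for all y. Uniqueness for the linear ODE (a Gronwall estimate for u^2 + u'^2) and the
  independence of w1, w2 rule out u(x) = u'(x) = 0, so g0 \<partial>y g1 - g1 \<partial>y g0 vanishes on
  A \<times> \<real> and hence identically, contradicting \<partial>y(g0/g1) \<noteq> 0.\<close>

lemma eval2_0 [simp]: "eval2 0 x y = 0"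
  by (simp add: eval2_def)

lemma eval2_pCons [simp]: "eval2 (pCons a g) x y = poly a x + y * eval2 g x y"
  by (simp add: eval2_def map_poly_pCons)

lemma eval2_poly_poly: "eval2 g x y = poly (poly g [:y:]) x"
  by (induction g) auto

lemma eval2_add [simp]: "eval2 (p + q) x y = eval2 p x y + eval2 q x y"
  and eval2_diff [simp]: "eval2 (p - q) x y = eval2 p x y - eval2 q x y"
  and eval2_mult [simp]: "eval2 (p * q) x y = eval2 p x y * eval2 q x y"
  and eval2_power [simp]: "eval2 (p ^ n) x y = eval2 p x y ^ n"
  and eval2_cx [simp]: "eval2 (cx a) x y = poly a x"
  by (simp_all add: eval2_poly_poly poly_power cx_def)

lemma dx2_0 [simp]: "dx2 0 = 0"
  by (simp add: dx2_def)

lemma dx2_pCons [simp]: "dx2 (pCons a g) = pCons (pderiv a) (dx2 g)"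
  by (simp add: dx2_def map_poly_pCons)

lemma eval2_dy2: "eval2 (dy2 g) x y = poly (pderiv (map_poly (\<lambda>c. poly c x) g)) y"
proof (induction g)
  case (pCons a g)
  have "eval2 (dy2 (pCons a g)) x y = eval2 g x y + y * eval2 (dy2 g) x y"
    by (simp add: dy2_def pderiv_pCons)
  then show ?case
    using pCons.IH by (simp add: eval2_def map_poly_pCons pderiv_pCons)
qed (simp add: dy2_def)

lemma eval2_DERIV_y: "((\<lambda>t. eval2 g x t) has_real_derivative eval2 (dy2 g) x y) (at y)"
  by (subst eval2_dy2) (simp add: eval2_def[abs_def])

lemma has_derivative_comp_fst:
  assumes "(\<phi> has_real_derivative d) (at x)"
  shows "((\<lambda>p. \<phi> (fst p)) has_derivative (\<lambda>h. d * fst h)) (at (x, y))"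
proof -
  have "(\<phi> has_derivative (*) d) (at (fst (x, y)))"
    using has_field_derivative_imp_has_derivative[OF assms] by simp
  from has_derivative_compose[OF bounded_linear_imp_has_derivative[OF bounded_linear_fst] this]
  show ?thesis by simp
qed

lemma eval2_has_derivative:
  "((\<lambda>p. eval2 g (fst p) (snd p)) has_derivative
     (\<lambda>h. eval2 (dx2 g) x y * fst h + eval2 (dy2 g) x y * snd h)) (at (x, y))"
proof (induction g)
  case (pCons a g)
  have "((\<lambda>p. poly a (fst p) + snd p * eval2 g (fst p) (snd p)) has_derivative
      (\<lambda>h. poly (pderiv a) x * fst h + (snd (x, y) * (eval2 (dx2 g) x y * fst h
         + eval2 (dy2 g) x y * snd h) + snd h * eval2 g (fst (x, y)) (snd (x, y))))) (at (x, y))"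
    by (intro has_derivative_add has_derivative_mult has_derivative_comp_fst poly_DERIV
        has_derivative_snd[OF has_derivative_ident] pCons.IH)
  then show ?case
    unfolding eval2_pCons
    by (rule has_derivative_eq_rhs) (auto simp: fun_eq_iff dy2_def pderiv_pCons algebra_simps)
qed (simp add: dy2_def)

lemma continuous_on_eval2: "continuous_on S (\<lambda>p. eval2 g (fst p) (snd p))"
proof -
  have "isCont (\<lambda>p. eval2 g (fst p) (snd p)) p" for p
    using eval2_has_derivative[of g "fst p" "snd p"] has_derivative_continuous by fastforce
  then show ?thesis
    by (simp add: continuous_at_imp_continuous_on)
qed

lemma poly_eq_0_if_infinite_roots:
  fixes p :: "'a::idom poly"
  assumes "infinite S" "\<And>x. x \<in> S \<Longrightarrow> poly p x = 0"
  shows "p = 0"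
  using assms poly_roots_finite[of p] finite_subset[of S "{x. poly p x = 0}"] by auto

lemma eval2_eq_0_if_infinite:
  assumes "infinite A" "\<And>x y. x \<in> A \<Longrightarrow> eval2 g x y = 0"
  shows "g = 0"
proof (rule poly_eq_0_if_infinite_roots)
  show "infinite (range (\<lambda>y::real. [:y:]))"
    using finite_imageD[of "\<lambda>y::real. [:y:]" UNIV] by (auto simp: inj_on_def infinite_UNIV_char_0)
  show "poly g c = 0" if "c \<in> range (\<lambda>y. [:y:])" for c
    using that assms by (auto intro: poly_eq_0_if_infinite_roots simp: eval2_poly_poly)
qed

lemma open_imp_infinite:
  fixes S :: "'a::{t1_space, perfect_space} set"
  assumes "open S" "x \<in> S"
  shows "infinite S"
  using infinite_openin[of UNIV S x] assms by simp

lemma wronskian_eq_0_if_dependent: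
  fixes p q :: "'a::field poly"
  assumes "smult a p = smult b q" "a \<noteq> 0 \<or> b \<noteq> 0"
  shows "p * pderiv q = q * pderiv p"
proof (cases "a = 0")
  case True
  then have "q = 0" using assms by simp
  then show ?thesis by simp
next
  case False
  then have "p = smult (b / a) q"
    using arg_cong[OF assms(1), of "smult (inverse a)"] by (simp add: field_simps)
  then show ?thesis by (simp add: pderiv_smult mult.commute)
qed

lemma wronskian_y_nonzero:
  assumes "eval2 g1 x y \<noteq> 0" "deriv (\<lambda>t. eval2 g0 x t / eval2 g1 x t) y \<noteq> 0"
  shows "g0 * dy2 g1 - g1 * dy2 g0 \<noteq> 0"
proof
  assume W: "g0 * dy2 g1 - g1 * dy2 g0 = 0"
  have "((\<lambda>t. eval2 g0 x t / eval2 g1 x t) has_real_derivative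
      (eval2 (dy2 g0) x y * eval2 g1 x y - eval2 g0 x y * eval2 (dy2 g1) x y)
        / (eval2 g1 x y * eval2 g1 x y)) (at y)"
    by (rule DERIV_divide[OF eval2_DERIV_y eval2_DERIV_y assms(1)])
  moreover have "eval2 (dy2 g0) x y * eval2 g1 x y - eval2 g0 x y * eval2 (dy2 g1) x y = 0"
    using arg_cong[OF W, of "\<lambda>g. eval2 g x y"] by (simp add: algebra_simps)
  ultimately show False
    using assms(2) DERIV_imp_deriv by fastforce
qed

lemma energy_derivative_bound:
  fixes u v b0 b1 M :: real
  assumes "\<bar>b0\<bar> + \<bar>b1\<bar> \<le> M"
  shows "\<bar>2 * u * v - 2 * v * (b1 * v + b0 * u)\<bar> \<le> (1 + 2 * M) * (u\<^sup>2 + v\<^sup>2)"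
proof -
  define Z where "Z = u\<^sup>2 + v\<^sup>2"
  have uv: "\<bar>2 * u * v\<bar> \<le> Z"
    using zero_le_power2[of "\<bar>u\<bar> - \<bar>v\<bar>"]
    by (simp add: Z_def power2_eq_square abs_mult algebra_simps)
  have "\<bar>2 * u * v - 2 * v * (b1 * v + b0 * u)\<bar>
      = \<bar>2 * u * v - (2 * b1 * v\<^sup>2 + b0 * (2 * u * v))\<bar>"
    by (simp add: power2_eq_square algebra_simps)
  also have "\<dots> \<le> \<bar>2 * u * v\<bar> + (\<bar>2 * b1 * v\<^sup>2\<bar> + \<bar>b0 * (2 * u * v)\<bar>)"
    by (meson abs_triangle_ineq abs_triangle_ineq4 add_left_mono order_trans)
  also have "\<dots> = \<bar>2 * u * v\<bar> + 2 * \<bar>b1\<bar> * v\<^sup>2 + \<bar>b0\<bar> * \<bar>2 * u * v\<bar>"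
    by (simp add: abs_mult)
  also have "\<dots> \<le> Z + 2 * \<bar>b1\<bar> * Z + \<bar>b0\<bar> * Z"
    using uv by (intro add_mono mult_left_mono) (auto simp: Z_def)
  also have "\<dots> \<le> (1 + 2 * M) * Z"
    using assms mult_right_mono[of "\<bar>b0\<bar> + 2 * \<bar>b1\<bar>" "2 * M" Z]
    by (simp add: Z_def algebra_simps)
  finally show ?thesis
    by (simp add: Z_def)
qed

lemma gronwall_zero_forward:
  fixes E E' :: "real \<Rightarrow> real"
  assumes "t0 \<le> t" "E t0 = 0" "0 \<le> E t"
    and D: "\<And>s. t0 \<le> s \<Longrightarrow> s \<le> t \<Longrightarrow> (E has_real_derivative E' s) (at s)"
    and bound: "\<And>s. t0 \<le> s \<Longrightarrow> s \<le> t \<Longrightarrow> E' s \<le> K * E s"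
  shows "E t = 0"
proof -
  have "E t * exp (- K * t) \<le> E t0 * exp (- K * t0)"
  proof (rule DERIV_nonpos_imp_nonincreasing[OF \<open>t0 \<le> t\<close>])
    fix s assume s: "t0 \<le> s" "s \<le> t"
    have "((\<lambda>s. E s * exp (- K * s)) has_real_derivative (E' s - K * E s) * exp (- K * s)) (at s)"
      using D s by (auto intro!: derivative_eq_intros simp: algebra_simps)
    moreover have "(E' s - K * E s) * exp (- K * s) \<le> 0"
      using bound s by (simp add: mult_nonpos_nonneg)
    ultimately show "\<exists>y. ((\<lambda>s. E s * exp (- K * s)) has_real_derivative y) (at s) \<and> y \<le> 0"
      by blast
  qed
  then show ?thesis
    using assms(2,3) by (simp add: mult_le_0_iff)
qed

lemma gronwall_zero:
  fixes E E' :: "real \<Rightarrow> real"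
  assumes "E t0 = 0" "0 \<le> E t"
    and D: "\<And>s. s \<in> closed_segment t0 t \<Longrightarrow> (E has_real_derivative E' s) (at s)"
    and bound: "\<And>s. s \<in> closed_segment t0 t \<Longrightarrow> \<bar>E' s\<bar> \<le> K * E s"
  shows "E t = 0"
proof (cases "t0 \<le> t")
  case True
  then show ?thesis
    using assms by (intro gronwall_zero_forward[of t0 t E E' K])
      (auto simp: closed_segment_eq_real_ivl abs_le_iff)
next
  case False
  have "E (- (- t)) = 0"
  proof (rule gronwall_zero_forward[of "- t0" "- t" "\<lambda>s. E (- s)" "\<lambda>s. - E' (- s)" K])
    fix s assume s: "- t0 \<le> s" "s \<le> - t"
    then have seg: "- s \<in> closed_segment t0 t"
      using False by (auto simp: closed_segment_eq_real_ivl)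
    show "((\<lambda>s. E (- s)) has_real_derivative - E' (- s)) (at s)"
      using D[OF seg] DERIV_mirror by simp
    show "- E' (- s) \<le> K * E (- s)"
      using bound[OF seg] by linarith
  qed (use False assms in auto)
  then show ?thesis by simp
qed

lemma linear_ode2_zero_unique:
  fixes u u' u'' p q :: "real \<Rightarrow> real"
  assumes I: "is_interval I" and cont: "continuous_on I p" "continuous_on I q"
    and du: "\<And>s. s \<in> I \<Longrightarrow> (u has_real_derivative u' s) (at s)"
    and du': "\<And>s. s \<in> I \<Longrightarrow> (u' has_real_derivative u'' s) (at s)"
    and ode: "\<And>s. s \<in> I \<Longrightarrow> u'' s = - (p s * u' s + q s * u s)"
    and init: "t0 \<in> I" "u t0 = 0" "u' t0 = 0" and "t \<in> I"
  shows "u t = 0"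
proof -
  define S where "S = closed_segment t0 t"
  have SI: "S \<subseteq> I"
    using I init(1) \<open>t \<in> I\<close> by (simp add: S_def is_interval_convex_1 convex_contains_segment)
  have "compact ((\<lambda>s. \<bar>q s\<bar> + \<bar>p s\<bar>) ` S)"
    unfolding S_def using SI[unfolded S_def]
    by (intro compact_continuous_image continuous_intros continuous_on_subset[OF cont(1)]
        continuous_on_subset[OF cont(2)]) auto
  then obtain M where "\<forall>z \<in> (\<lambda>s. \<bar>q s\<bar> + \<bar>p s\<bar>) ` S. \<bar>z\<bar> \<le> M"
    using compact_imp_bounded bounded_real by blast
  then have M: "\<bar>q s\<bar> + \<bar>p s\<bar> \<le> M" if "s \<in> S" for s
    using that by fastforce
  define E where "E s = (u s)\<^sup>2 + (u' s)\<^sup>2" for s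
  have "E t = 0"
  proof (rule gronwall_zero[of E t0 t "\<lambda>s. 2 * u s * u' s + 2 * u' s * u'' s" "1 + 2 * M"])
    fix s assume "s \<in> closed_segment t0 t"
    then have s: "s \<in> S" "s \<in> I" using SI by (auto simp: S_def)
    show "(E has_real_derivative 2 * u s * u' s + 2 * u' s * u'' s) (at s)"
      unfolding E_def[abs_def] using du[OF s(2)] du'[OF s(2)]
      by (auto intro!: derivative_eq_intros simp: algebra_simps)
    have "2 * u s * u' s + 2 * u' s * u'' s = 2 * u s * u' s - 2 * u' s * (p s * u' s + q s * u s)"
      unfolding ode[OF s(2)] by (simp add: algebra_simps)
    then show "\<bar>2 * u s * u' s + 2 * u' s * u'' s\<bar> \<le> (1 + 2 * M) * E s"
      using energy_derivative_bound[OF M[OF s(1)], of "u s" "u' s"] by (simp add: E_def)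
  qed (use init in \<open>auto simp: E_def\<close>)
  then show ?thesis
    by (simp add: E_def add_nonneg_eq_0_iff)
qed

lemma ode_solution_DERIV:
  assumes "ode_solution A0 A1 A2 I w" "x \<in> I"
  shows "(w has_real_derivative deriv w x) (at x)"
    and "(deriv w has_real_derivative deriv (deriv w) x) (at x)"
  using assms by (simp_all add: ode_solution_def DERIV_deriv_iff_real_differentiable)

lemma ode_solution_eq:
  assumes "ode_solution A0 A1 A2 I w" "x \<in> I"
  shows "poly A2 x * deriv (deriv w) x + poly A1 x * deriv w x + poly A0 x * w x = 0"
  using assms by (simp add: ode_solution_def)

lemma ode_solution_continuous:
  assumes sol: "ode_solution A0 A1 A2 I w" and A2: "\<forall>x\<in>I. poly A2 x \<noteq> 0"
  shows "continuous_on I w" "continuous_on I (deriv w)" "continuous_on I (deriv (deriv w))"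
proof -
  show cw: "continuous_on I w" and cw': "continuous_on I (deriv w)"
    using ode_solution_DERIV[OF sol]
    by (meson DERIV_isCont continuous_at_imp_continuous_on)+
  have "continuous_on I (\<lambda>x. - (poly A1 x * deriv w x + poly A0 x * w x) / poly A2 x)"
    using A2 cw cw' by (intro continuous_intros) auto
  then show "continuous_on I (deriv (deriv w))"
  proof (rule continuous_on_eq)
    fix x assume "x \<in> I"
    then have "poly A2 x * deriv (deriv w) x = - (poly A1 x * deriv w x + poly A0 x * w x)"
      using ode_solution_eq[OF sol] by fastforce
    then show "- (poly A1 x * deriv w x + poly A0 x * w x) / poly A2 x = deriv (deriv w) x"
      using A2 \<open>x \<in> I\<close> by (simp add: divide_eq_eq mult.commute)
  qed
qed

lemma fundamental_system_nonproportional: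
  assumes fund: "fundamental_system A0 A1 A2 I w1 w2" and I: "is_interval I"
    and A2: "\<forall>x\<in>I. poly A2 x \<noteq> 0" and "x \<in> I"
  shows "w1 x \<noteq> c * w2 x \<or> deriv w1 x \<noteq> c * deriv w2 x"
proof (rule ccontr)
  assume proportional: "\<not> ?thesis"
  have sol: "ode_solution A0 A1 A2 I w1" "ode_solution A0 A1 A2 I w2"
    and indep: "\<And>c1 c2. \<forall>x\<in>I. c1 * w1 x + c2 * w2 x = 0 \<Longrightarrow> c1 = 0 \<and> c2 = 0"
    using fund unfolding fundamental_system_def by blast+
  have solve_for_u'': "z = - (a1 / a2 * y + a0 / a2 * x)"
    if "a2 * z + (a1 * y + a0 * x) = 0" "a2 \<noteq> 0" for a2 a1 a0 z y x :: real
    using that by (simp add: field_simps)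
  have "w1 t - c * w2 t = 0" if "t \<in> I" for t
  proof (rule linear_ode2_zero_unique[where u' = "\<lambda>s. deriv w1 s - c * deriv w2 s"
        and u'' = "\<lambda>s. deriv (deriv w1) s - c * deriv (deriv w2) s"
        and p = "\<lambda>s. poly A1 s / poly A2 s" and q = "\<lambda>s. poly A0 s / poly A2 s",
        OF I _ _ _ _ _ \<open>x \<in> I\<close> _ _ that])
    show "w1 x - c * w2 x = 0" "deriv w1 x - c * deriv w2 x = 0"
      using proportional by simp_all
    show "continuous_on I (\<lambda>s. poly A1 s / poly A2 s)" "continuous_on I (\<lambda>s. poly A0 s / poly A2 s)"
      using A2 by (auto intro!: continuous_intros)
  next
    fix s assume s: "s \<in> I"
    show "((\<lambda>s. w1 s - c * w2 s) has_real_derivative deriv w1 s - c * deriv w2 s) (at s)"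
      using ode_solution_DERIV(1)[OF sol(1) s] ode_solution_DERIV(1)[OF sol(2) s]
      by (auto intro!: derivative_eq_intros)
    show "((\<lambda>s. deriv w1 s - c * deriv w2 s) has_real_derivative
        deriv (deriv w1) s - c * deriv (deriv w2) s) (at s)"
      using ode_solution_DERIV(2)[OF sol(1) s] ode_solution_DERIV(2)[OF sol(2) s]
      by (auto intro!: derivative_eq_intros)
    have "poly A2 s * (deriv (deriv w1) s - c * deriv (deriv w2) s)
        + (poly A1 s * (deriv w1 s - c * deriv w2 s) + poly A0 s * (w1 s - c * w2 s))
      = (poly A2 s * deriv (deriv w1) s + poly A1 s * deriv w1 s + poly A0 s * w1 s)
        - c * (poly A2 s * deriv (deriv w2) s + poly A1 s * deriv w2 s + poly A0 s * w2 s)"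
      by (simp add: algebra_simps)
    also have "\<dots> = 0"
      using ode_solution_eq[OF sol(1) s] ode_solution_eq[OF sol(2) s] by simp
    finally show "deriv (deriv w1) s - c * deriv (deriv w2) s
        = - (poly A1 s / poly A2 s * (deriv w1 s - c * deriv w2 s)
             + poly A0 s / poly A2 s * (w1 s - c * w2 s))"
      by (rule solve_for_u'') (use A2 s in auto)
  qed
  then have "\<forall>t\<in>I. 1 * w1 t + (- c) * w2 t = 0"
    by simp
  then show False
    using indep[of 1 "- c"] by simp
qed

text \<open>The function f_w of the statement; it vanishes on the curve g0/g1 = w'/w.\<close>

definition curve_fun :: "real poly poly \<Rightarrow> real poly poly \<Rightarrow> (real \<Rightarrow> real) \<Rightarrow> real \<times> real \<Rightarrow> real"
  where "curve_fun g0 g1 w = (\<lambda>(x, y). eval2 g1 x y * deriv w x - eval2 g0 x y * w x)"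

abbreviation curve_fun_dx :: "real poly poly \<Rightarrow> real poly poly \<Rightarrow> (real \<Rightarrow> real) \<Rightarrow> real \<times> real \<Rightarrow> real"
  where "curve_fun_dx g0 g1 w \<equiv> \<lambda>p. curve_fun (dx2 g0) (dx2 g1) w p + curve_fun g0 g1 (deriv w) p"

abbreviation curve_fun_dy :: "real poly poly \<Rightarrow> real poly poly \<Rightarrow> (real \<Rightarrow> real) \<Rightarrow> real \<times> real \<Rightarrow> real"
  where "curve_fun_dy g0 g1 w \<equiv> curve_fun (dy2 g0) (dy2 g1) w"

lemma curve_fun_apply:
  "curve_fun g0 g1 w p
    = eval2 g1 (fst p) (snd p) * deriv w (fst p) - eval2 g0 (fst p) (snd p) * w (fst p)"
  by (simp add: curve_fun_def split_beta)

lemma has_derivative_curve_fun: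
  assumes "(w has_real_derivative deriv w x) (at x)"
    and "(deriv w has_real_derivative deriv (deriv w) x) (at x)"
  shows "(curve_fun g0 g1 w has_derivative
      (\<lambda>(u, v). curve_fun_dx g0 g1 w (x, y) * u + curve_fun_dy g0 g1 w (x, y) * v)) (at (x, y))"
proof -
  have "((\<lambda>p. eval2 g1 (fst p) (snd p) * deriv w (fst p) - eval2 g0 (fst p) (snd p) * w (fst p))
      has_derivative (\<lambda>h. (eval2 g1 (fst (x, y)) (snd (x, y)) * (deriv (deriv w) x * fst h)
          + (eval2 (dx2 g1) x y * fst h + eval2 (dy2 g1) x y * snd h) * deriv w (fst (x, y)))
        - (eval2 g0 (fst (x, y)) (snd (x, y)) * (deriv w x * fst h)
          + (eval2 (dx2 g0) x y * fst h + eval2 (dy2 g0) x y * snd h) * w (fst (x, y)))))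
      (at (x, y))"
    by (intro has_derivative_diff has_derivative_mult eval2_has_derivative has_derivative_comp_fst assms)
  then show ?thesis
    unfolding curve_fun_apply[abs_def]
    by (rule has_derivative_eq_rhs) (auto simp: fun_eq_iff algebra_simps)
qed

lemma continuous_on_curve_fun:
  assumes "continuous_on I w" "continuous_on I (deriv w)" "fst ` S \<subseteq> I"
  shows "continuous_on S (curve_fun g0 g1 w)"
proof -
  have comp_fst: "continuous_on S (\<lambda>p. \<phi> (fst p))" if "continuous_on I \<phi>" for \<phi>
    using continuous_on_compose2[OF that continuous_on_fst[OF continuous_on_id] assms(3)] by simp
  show ?thesis
    unfolding curve_fun_apply[abs_def]
    by (intro continuous_intros continuous_on_eval2 comp_fst assms(1,2))
qed

text \<open>The left-hand side equals g1 (g0 \<partial>y g1 - g1 \<partial>y g0) (f2 L w1 - f1 L w2).\<close>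

lemma curve_fun_invariance:
  fixes A0 A1 A2 :: "real poly" and g0 g1 :: "real poly poly"
  defines "P \<equiv> cx A2 * (g0 * dy2 g1 - g1 * dy2 g0)"
    and "Q \<equiv> cx A0 * g1\<^sup>2 + cx A1 * g1 * g0 + cx A2 * g0\<^sup>2 + cx A2 * (g1 * dx2 g0 - g0 * dx2 g1)"
  assumes "poly A2 x * deriv (deriv w1) x + poly A1 x * deriv w1 x + poly A0 x * w1 x = 0"
    and "poly A2 x * deriv (deriv w2) x + poly A1 x * deriv w2 x + poly A0 x * w2 x = 0"
  shows "eval2 P x y * (curve_fun_dx g0 g1 w1 (x, y) * curve_fun g0 g1 w2 (x, y)
           - curve_fun g0 g1 w1 (x, y) * curve_fun_dx g0 g1 w2 (x, y))
       + eval2 Q x y * (curve_fun_dy g0 g1 w1 (x, y) * curve_fun g0 g1 w2 (x, y)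
           - curve_fun g0 g1 w1 (x, y) * curve_fun_dy g0 g1 w2 (x, y)) = 0"
  using assms(3,4) unfolding P_def Q_def by (simp add: curve_fun_def) algebra

lemma first_integral_quotient:
  fixes F1 F2 F1x F1y F2x F2y P Q :: "real \<times> real \<Rightarrow> real"
  assumes D1: "\<And>p. p \<in> U \<Longrightarrow> (F1 has_derivative (\<lambda>(u, v). F1x p * u + F1y p * v)) (at p)"
    and D2: "\<And>p. p \<in> U \<Longrightarrow> (F2 has_derivative (\<lambda>(u, v). F2x p * u + F2y p * v)) (at p)"
    and cont: "continuous_on U F1x" "continuous_on U F1y" "continuous_on U F2x" "continuous_on U F2y"
    and nz: "\<And>p. p \<in> U \<Longrightarrow> F2 p \<noteq> 0"
    and invariant: "\<And>p. p \<in> U \<Longrightarrow>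
      P p * (F1x p * F2 p - F1 p * F2x p) + Q p * (F1y p * F2 p - F1 p * F2y p) = 0"
    and nonconst: "\<And>V c. open V \<Longrightarrow> V \<noteq> {} \<Longrightarrow> V \<subseteq> U \<Longrightarrow> \<exists>p\<in>V. F1 p / F2 p \<noteq> c"
  shows "first_integral P Q U (\<lambda>p. F1 p / F2 p)"
proof -
  define Hx where "Hx p = (F1x p * F2 p - F1 p * F2x p) / (F2 p)\<^sup>2" for p
  define Hy where "Hy p = (F1y p * F2 p - F1 p * F2y p) / (F2 p)\<^sup>2" for p
  have "((\<lambda>p. F1 p / F2 p) has_derivative (\<lambda>(u, v). Hx p * u + Hy p * v)) (at p)" if "p \<in> U" for p
    using has_derivative_divide'[OF D1[OF that] D2[OF that] nz[OF that]]
    by (rule has_derivative_eq_rhs)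
      (auto simp: fun_eq_iff Hx_def Hy_def field_simps power2_eq_square nz[OF that])
  moreover have "continuous_on U F1" "continuous_on U F2"
    using D1 D2 by (meson has_derivative_continuous continuous_at_imp_continuous_on)+
  then have "continuous_on U Hx" "continuous_on U Hy"
    unfolding Hx_def Hy_def using cont nz by (auto intro!: continuous_intros)
  moreover have "P p * Hx p + Q p * Hy p = 0" if "p \<in> U" for p
    using invariant[OF that] by (simp add: Hx_def Hy_def add_divide_distrib[symmetric])
  ultimately show ?thesis
    unfolding first_integral_def using nonconst by blast
qed

lemma curve_fun_quotient_nonconstant:
  assumes fund: "fundamental_system A0 A1 A2 I w1 w2" and I: "is_interval I"
    and A2: "\<forall>x\<in>I. poly A2 x \<noteq> 0" and W: "g0 * dy2 g1 - g1 * dy2 g0 \<noteq> 0"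
    and V: "open V" "V \<noteq> {}" "\<And>p. p \<in> V \<Longrightarrow> fst p \<in> I \<and> curve_fun g0 g1 w2 p \<noteq> 0"
  shows "\<exists>p\<in>V. curve_fun g0 g1 w1 p / curve_fun g0 g1 w2 p \<noteq> c"
proof (rule ccontr)
  assume "\<not> ?thesis"
  then have const: "curve_fun g0 g1 w1 p = c * curve_fun g0 g1 w2 p" if "p \<in> V" for p
    using V(3)[OF that] that by (auto simp: divide_eq_eq)
  obtain p0 where "p0 \<in> V" using V(2) by blast
  then obtain A B where AB: "open A" "open B" "p0 \<in> A \<times> B" "A \<times> B \<subseteq> V"
    using open_prod_elim[OF V(1)] by metis
  have "infinite A" "infinite B"
    using AB open_imp_infinite by (auto simp: mem_Times_iff)
  have "eval2 (g0 * dy2 g1 - g1 * dy2 g0) x y = 0" if "x \<in> A" for x y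
  proof -
    define G0 where "G0 = map_poly (\<lambda>c. poly c x) g0"
    define G1 where "G1 = map_poly (\<lambda>c. poly c x) g1"
    have "x \<in> I"
      using AB(3,4) V(3) that by (auto simp: mem_Times_iff)
    have "smult (deriv w1 x - c * deriv w2 x) G1 - smult (w1 x - c * w2 x) G0 = 0"
    proof (rule poly_eq_0_if_infinite_roots[OF \<open>infinite B\<close>])
      fix y assume "y \<in> B"
      then have "(x, y) \<in> V" using AB(4) that by auto
      from const[OF this] show "poly (smult (deriv w1 x - c * deriv w2 x) G1
          - smult (w1 x - c * w2 x) G0) y = 0"
        by (simp add: G0_def G1_def curve_fun_def eval2_def[symmetric] algebra_simps)
    qed
    moreover have "deriv w1 x - c * deriv w2 x \<noteq> 0 \<or> w1 x - c * w2 x \<noteq> 0"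
      using fundamental_system_nonproportional[OF fund I A2 \<open>x \<in> I\<close>, of c] by auto
    ultimately have "G1 * pderiv G0 = G0 * pderiv G1"
      by (intro wronskian_eq_0_if_dependent) auto
    then have "poly (G0 * pderiv G1 - G1 * pderiv G0) y = 0"
      by simp
    then show ?thesis
      by (simp add: eval2_dy2 G0_def G1_def) (simp add: eval2_def)
  qed
  then have "g0 * dy2 g1 - g1 * dy2 g0 = 0"
    by (rule eval2_eq_0_if_infinite[OF \<open>infinite A\<close>])
  with W show False ..
qed

lemma open_Collect_nonzero_strip:
  fixes f :: "'a::topological_space \<times> 'b::topological_space \<Rightarrow> 'c::{t1_space, zero}"
  assumes "open I" "continuous_on (I \<times> UNIV) f"
  shows "open {(x, y). x \<in> I \<and> f (x, y) \<noteq> 0}"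
proof -
  have "{(x, y). x \<in> I \<and> f (x, y) \<noteq> 0} = (I \<times> UNIV) \<inter> f -` (- {0})"
    by auto
  moreover have "\<forall>B. open B \<longrightarrow> open (f -` B \<inter> I \<times> UNIV)"
    using assms continuous_on_open_vimage[of "I \<times> UNIV" f] by (simp add: open_Times)
  then have "open (f -` (- {0}) \<inter> I \<times> UNIV)"
    by (simp add: open_Compl)
  ultimately show ?thesis
    by (simp add: Int_commute)
qed

lemma first_integral_curve_fun_quotient:
  fixes A0 A1 A2 :: "real poly" and g0 g1 :: "real poly poly"
    and I :: "real set" and w1 w2 :: "real \<Rightarrow> real"
  defines "P \<equiv> cx A2 * (g0 * dy2 g1 - g1 * dy2 g0)"
    and "Q \<equiv> cx A0 * g1\<^sup>2 + cx A1 * g1 * g0 + cx A2 * g0\<^sup>2 + cx A2 * (g1 * dx2 g0 - g0 * dx2 g1)"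
    and "U \<equiv> {(x, y). x \<in> I \<and> curve_fun g0 g1 w2 (x, y) \<noteq> 0}"
  assumes fund: "fundamental_system A0 A1 A2 I w1 w2" and I: "is_interval I"
    and A2: "\<forall>x\<in>I. poly A2 x \<noteq> 0" and W: "g0 * dy2 g1 - g1 * dy2 g0 \<noteq> 0"
  shows "first_integral (\<lambda>(x, y). eval2 P x y) (\<lambda>(x, y). eval2 Q x y) U
    (\<lambda>p. curve_fun g0 g1 w1 p / curve_fun g0 g1 w2 p)"
proof (rule first_integral_quotient[where F1x = "curve_fun_dx g0 g1 w1" and F1y = "curve_fun_dy g0 g1 w1"
      and F2x = "curve_fun_dx g0 g1 w2" and F2y = "curve_fun_dy g0 g1 w2"])
  have sol: "ode_solution A0 A1 A2 I w1" "ode_solution A0 A1 A2 I w2"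
    using fund unfolding fundamental_system_def by blast+
  have UI: "fst ` U \<subseteq> I"
    by (auto simp: U_def)
  have "continuous_on U (curve_fun_dx g0 g1 w)" "continuous_on U (curve_fun_dy g0 g1 w)"
    if "ode_solution A0 A1 A2 I w" for w
    using ode_solution_continuous[OF that A2] UI
    by (auto intro!: continuous_intros continuous_on_curve_fun)
  then show "continuous_on U (curve_fun_dx g0 g1 w1)" "continuous_on U (curve_fun_dy g0 g1 w1)"
    "continuous_on U (curve_fun_dx g0 g1 w2)" "continuous_on U (curve_fun_dy g0 g1 w2)"
    using sol by simp_all
  fix p assume "p \<in> U"
  then obtain x y where p: "p = (x, y)" "x \<in> I" "curve_fun g0 g1 w2 (x, y) \<noteq> 0"
    by (auto simp: U_def)
  show "(curve_fun g0 g1 w1 has_derivative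
      (\<lambda>(u, v). curve_fun_dx g0 g1 w1 p * u + curve_fun_dy g0 g1 w1 p * v)) (at p)"
    "(curve_fun g0 g1 w2 has_derivative
      (\<lambda>(u, v). curve_fun_dx g0 g1 w2 p * u + curve_fun_dy g0 g1 w2 p * v)) (at p)"
    unfolding p(1) using ode_solution_DERIV[OF sol(1) p(2)] ode_solution_DERIV[OF sol(2) p(2)]
    by (auto intro: has_derivative_curve_fun)
  show "curve_fun g0 g1 w2 p \<noteq> 0"
    using p by simp
  show "(\<lambda>(x, y). eval2 P x y) p * (curve_fun_dx g0 g1 w1 p * curve_fun g0 g1 w2 p
        - curve_fun g0 g1 w1 p * curve_fun_dx g0 g1 w2 p)
      + (\<lambda>(x, y). eval2 Q x y) p * (curve_fun_dy g0 g1 w1 p * curve_fun g0 g1 w2 p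
        - curve_fun g0 g1 w1 p * curve_fun_dy g0 g1 w2 p) = 0"
    unfolding p(1) case_prod_conv P_def Q_def
    by (rule curve_fun_invariance[OF ode_solution_eq[OF sol(1) p(2)] ode_solution_eq[OF sol(2) p(2)]])
next
  fix V c assume V: "open V" "V \<noteq> {}" "V \<subseteq> U"
  then have "fst p \<in> I \<and> curve_fun g0 g1 w2 p \<noteq> 0" if "p \<in> V" for p
    using that by (auto simp: U_def)
  then show "\<exists>p\<in>V. curve_fun g0 g1 w1 p / curve_fun g0 g1 w2 p \<noteq> c"
    by (rule curve_fun_quotient_nonconstant[OF fund I A2 W V(1,2)])
qed

theorem mainTheorem3:
  fixes A0 A1 A2 :: "real poly" and g0 g1 :: "real poly poly"
    and I :: "real set" and w1 w2 :: "real \<Rightarrow> real"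
  assumes A2_nz: "A2 \<noteq> 0"
    and I_int: "is_interval I" "open I" "I \<noteq> {}"
    and A2_I: "\<forall>x\<in>I. poly A2 x \<noteq> 0"
    and g1_nz: "g1 \<noteq> 0"
    and dy_quot: "\<exists>x y. eval2 g1 x y \<noteq> 0 \<and> deriv (\<lambda>t. eval2 g0 x t / eval2 g1 x t) y \<noteq> 0"
    and fund: "fundamental_system A0 A1 A2 I w1 w2"
  shows "let P = cx A2 * (g0 * dy2 g1 - g1 * dy2 g0);
             Q = cx A0 * g1\<^sup>2 + cx A1 * g1 * g0 + cx A2 * g0\<^sup>2 + cx A2 * (g1 * dx2 g0 - g0 * dx2 g1);
             f1 = (\<lambda>(x, y). eval2 g1 x y * deriv w1 x - eval2 g0 x y * w1 x);
             f2 = (\<lambda>(x, y). eval2 g1 x y * deriv w2 x - eval2 g0 x y * w2 x);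
             U = {(x, y). x \<in> I \<and> f2 (x, y) \<noteq> 0}
         in open U \<and>
            first_integral (\<lambda>(x, y). eval2 P x y) (\<lambda>(x, y). eval2 Q x y) U (\<lambda>p. f1 p / f2 p)"
proof -
  txt \<open>A2_nz and g1_nz are implied by A2_I (for I \<noteq> {}) and dy_quot.\<close>
  have W: "g0 * dy2 g1 - g1 * dy2 g0 \<noteq> 0"
    using dy_quot wronskian_y_nonzero by blast
  have sol: "ode_solution A0 A1 A2 I w2"
    using fund unfolding fundamental_system_def by blast
  have "open {(x, y). x \<in> I \<and> curve_fun g0 g1 w2 (x, y) \<noteq> 0}"
    using ode_solution_continuous[OF sol A2_I]
    by (intro open_Collect_nonzero_strip I_int(2) continuous_on_curve_fun) auto
  with first_integral_curve_fun_quotient[OF fund I_int(1) A2_I W] show ?thesis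
    unfolding Let_def curve_fun_def by blast
qed

end
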